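(* Work in $\mathsf{ZF}$. For every (definable) proper class $\mathcal{C}$ and every non-zero ordinal $\alpha$, there is a surjection from $\mathcal{C}$ onto $\alpha$. *)

theory Defs
  imports Main
begin

datatype form =
    Mem nat nat
  | Eq nat nat
  | Neg form
  | Conj form form
  | Ex nat form

fun sat :: "('a \<Rightarrow> 'a \<Rightarrow> bool) \<Rightarrow> (nat \<Rightarrow> 'a) \<Rightarrow> form \<Rightarrow> bool" where
  "sat r e (Mem i j) = r (e i) (e j)"
| "sat r e (Eq i j) = (e i = e j)"
| "sat r e (Neg p) = (\<not> sat r e p)"
| "sat r e (Conj p q) = (sat r e p \<and> sat r e q)"
| "sat r e (Ex n p) = (\<exists>a. sat r (e(n := a)) p)"

definition zf_model :: "('a \<Rightarrow> 'a \<Rightarrow> bool) \<Rightarrow> bool" where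
  "zf_model r \<longleftrightarrow>
     \<comment> \<open>Extensionality\<close>
     (\<forall>x y. (\<forall>z. r z x \<longleftrightarrow> r z y) \<longrightarrow> x = y) \<and>
     \<comment> \<open>Foundation\<close>
     (\<forall>x. (\<exists>y. r y x) \<longrightarrow> (\<exists>y. r y x \<and> \<not> (\<exists>z. r z y \<and> r z x))) \<and>
     \<comment> \<open>Pairing\<close>
     (\<forall>x y. \<exists>p. r x p \<and> r y p) \<and>
     \<comment> \<open>Union\<close>
     (\<forall>x. \<exists>u. \<forall>y z. r z y \<and> r y x \<longrightarrow> r z u) \<and>
     \<comment> \<open>Power set\<close>
     (\<forall>x. \<exists>p. \<forall>y. (\<forall>z. r z y \<longrightarrow> r z x) \<longrightarrow> r y p) \<and>
     \<comment> \<open>Infinity\<close>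
     (\<exists>I. (\<exists>e. r e I \<and> (\<forall>z. \<not> r z e)) \<and>
          (\<forall>y. r y I \<longrightarrow> (\<exists>s. r s I \<and> (\<forall>z. r z s \<longleftrightarrow> r z y \<or> z = y)))) \<and>
     \<comment> \<open>Separation schema\<close>
     (\<forall>\<phi> e n x. \<exists>y. \<forall>z. r z y \<longleftrightarrow> r z x \<and> sat r (e(n := z)) \<phi>) \<and>
     \<comment> \<open>Replacement schema\<close>
     (\<forall>\<phi> e n m x. n \<noteq> m \<longrightarrow>
        (\<forall>u. r u x \<longrightarrow> (\<exists>!w. sat r (e(n := u, m := w)) \<phi>)) \<longrightarrow>
        (\<exists>y. \<forall>w. r w y \<longleftrightarrow> (\<exists>u. r u x \<and> sat r (e(n := u, m := w)) \<phi>)))"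

definition def_class :: "('a \<Rightarrow> 'a \<Rightarrow> bool) \<Rightarrow> form \<Rightarrow> (nat \<Rightarrow> 'a) \<Rightarrow> nat \<Rightarrow> 'a set" where
  "def_class r \<phi> e n = {a. sat r (e(n := a)) \<phi>}"

definition proper_class :: "('a \<Rightarrow> 'a \<Rightarrow> bool) \<Rightarrow> 'a set \<Rightarrow> bool" where
  "proper_class r C \<longleftrightarrow> \<not> (\<exists>s. \<forall>a. r a s \<longleftrightarrow> a \<in> C)"

definition zf_transitive :: "('a \<Rightarrow> 'a \<Rightarrow> bool) \<Rightarrow> 'a \<Rightarrow> bool" where
  "zf_transitive r x \<longleftrightarrow> (\<forall>y z. r z y \<and> r y x \<longrightarrow> r z x)"

definition zf_ordinal :: "('a \<Rightarrow> 'a \<Rightarrow> bool) \<Rightarrow> 'a \<Rightarrow> bool" where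
  "zf_ordinal r x \<longleftrightarrow>
     zf_transitive r x \<and>
     (\<forall>y. r y x \<longrightarrow> \<not> r y y) \<and>
     (\<forall>y z w. r y x \<and> r z x \<and> r w x \<and> r y z \<and> r z w \<longrightarrow> r y w) \<and>
     (\<forall>y z. r y x \<and> r z x \<longrightarrow> r y z \<or> y = z \<or> r z y) \<and>
     (\<forall>s. (\<exists>y. r y s) \<and> (\<forall>y. r y s \<longrightarrow> r y x) \<longrightarrow>
          (\<exists>y. r y s \<and> (\<forall>z. r z s \<longrightarrow> \<not> r z y)))"

definition class_surj_onto ::
  "('a \<Rightarrow> 'a \<Rightarrow> bool) \<Rightarrow> 'a set \<Rightarrow> form \<Rightarrow> (nat \<Rightarrow> 'a) \<Rightarrow> nat \<Rightarrow> nat \<Rightarrow> 'a \<Rightarrow> bool" where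
  "class_surj_onto r C \<psi> e i j a \<longleftrightarrow>
     (\<forall>x\<in>C. \<exists>!y. sat r (e(i := x, j := y)) \<psi>) \<and>
     (\<forall>x\<in>C. \<forall>y. sat r (e(i := x, j := y)) \<psi> \<longrightarrow> r y a) \<and>
     (\<forall>y. r y a \<longrightarrow> (\<exists>x\<in>C. sat r (e(i := x, j := y)) \<psi>))"

end

theory Submission
  imports Defs
begin

text \<open>
  Since \<open>C\<close> is a proper class, separation shows that no set contains \<open>C\<close>. Every set lies in
  some level \<open>V\<^sub>\<beta>\<close> of the cumulative hierarchy, so the ranks of the elements of \<open>C\<close> are
  unbounded among the ordinals. By transfinite recursion along \<open>\<alpha>\<close>, let \<open>E(\<beta>)\<close> be the least rank
  of an element of \<open>C\<close> that is not of the form \<open>E(\<gamma>)\<close> with \<open>\<gamma> < \<beta>\<close>. Then \<open>E\<close> is injective, and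
  sending \<open>x \<in> C\<close> to the unique \<open>\<beta> < \<alpha>\<close> with \<open>E(\<beta>) = rank x\<close> (and to \<open>0\<close> if there is none) is a
  definable map from \<open>C\<close> onto \<open>\<alpha>\<close>.

  All of this takes place inside an arbitrary model \<open>r\<close> of ZF, so each class, class function and
  recursion used along the way must be shown to be definable by a formula before the separation
  and replacement schemas can be applied to it.
\<close>

lemma
  assumes zf: "zf_model r"
  shows extensionality_ax: "\<forall>x y. (\<forall>z. r z x \<longleftrightarrow> r z y) \<longrightarrow> x = y"
    and foundation_ax: "\<forall>x. (\<exists>y. r y x) \<longrightarrow> (\<exists>y. r y x \<and> \<not> (\<exists>z. r z y \<and> r z x))"
    and pairing_ax: "\<forall>x y. \<exists>p. r x p \<and> r y p"
    and union_ax: "\<forall>x. \<exists>u. \<forall>y z. r z y \<and> r y x \<longrightarrow> r z u"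
    and power_ax: "\<forall>x. \<exists>p. \<forall>y. (\<forall>z. r z y \<longrightarrow> r z x) \<longrightarrow> r y p"
    and infinity_ax: "\<exists>I. (\<exists>e. r e I \<and> (\<forall>z. \<not> r z e)) \<and>
          (\<forall>y. r y I \<longrightarrow> (\<exists>s. r s I \<and> (\<forall>z. r z s \<longleftrightarrow> r z y \<or> z = y)))"
    and separation_ax: "\<forall>\<phi> e n x. \<exists>y. \<forall>z. r z y \<longleftrightarrow> r z x \<and> sat r (e(n := z)) \<phi>"
    and replacement_ax: "\<forall>\<phi> e n m x. n \<noteq> m \<longrightarrow>
        (\<forall>u. r u x \<longrightarrow> (\<exists>!w. sat r (e(n := u, m := w)) \<phi>)) \<longrightarrow>
        (\<exists>y. \<forall>w. r w y \<longleftrightarrow> (\<exists>u. r u x \<and> sat r (e(n := u, m := w)) \<phi>))"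
  using zf unfolding zf_model_def by simp_all

section \<open>Definable relations\<close>

fun rename :: "(nat \<Rightarrow> nat) \<Rightarrow> form \<Rightarrow> form" where
  "rename g (Mem i j) = Mem (g i) (g j)"
| "rename g (Eq i j) = Eq (g i) (g j)"
| "rename g (Neg p) = Neg (rename g p)"
| "rename g (Conj p q) = Conj (rename g p) (rename g q)"
| "rename g (Ex n p) = Ex (g n) (rename g p)"

lemma sat_rename: "inj g \<Longrightarrow> sat r e (rename g \<phi>) = sat r (e \<circ> g) \<phi>"
proof (induction \<phi> arbitrary: e)
  case (Ex n p)
  have upd: "\<And>a. (e(g n := a)) \<circ> g = (e \<circ> g)(n := a)" using Ex.prems by (auto simp: inj_eq)
  have "sat r e (rename g (Ex n p)) = (\<exists>a. sat r (e(g n := a)) (rename g p))" by simp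
  also have "\<dots> = (\<exists>a. sat r ((e(g n := a)) \<circ> g) p)" using Ex.IH[OF Ex.prems] by blast
  also have "\<dots> = sat r (e \<circ> g) (Ex n p)" unfolding upd by simp
  finally show ?case .
qed auto

text \<open>The \<open>i\<close>-th entry of a list of arguments is stored in variable \<open>2 * i\<close>; the odd variables are
  reserved for parameters.\<close>
definition list_env :: "'a list \<Rightarrow> (nat \<Rightarrow> 'a) \<Rightarrow> nat \<Rightarrow> 'a" where
  "list_env xs q i = (if even i \<and> i div 2 < length xs then xs ! (i div 2) else q i)"

lemma list_env_snoc: "length xs = n \<Longrightarrow> (list_env xs q)(2*n := a) = list_env (xs @ [a]) q"
proof (rule ext)
  fix i assume len: "length xs = n"
  show "((list_env xs q)(2*n := a)) i = list_env (xs @ [a]) q i"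
  proof (cases "i = 2*n")
    case True then show ?thesis using len by (simp add: list_env_def nth_append)
  next
    case False
    then have "even i \<and> i div 2 < Suc n \<longleftrightarrow> even i \<and> i div 2 < n" by auto
    then show ?thesis using False len by (auto simp: list_env_def nth_append)
  qed
qed

definition proj :: "nat \<Rightarrow> ('a list \<Rightarrow> 'a) \<Rightarrow> bool" where
  "proj n f \<longleftrightarrow> (\<exists>i<n. \<forall>xs. length xs = n \<longrightarrow> f xs = xs ! i)"

lemma proj_nth: "i < n \<Longrightarrow> proj n (\<lambda>xs. xs ! i)"
  unfolding proj_def by auto

lemma proj_take: "proj n f \<Longrightarrow> n \<le> m \<Longrightarrow> proj m (\<lambda>ys. f (take n ys))"
  unfolding proj_def by force

lemmas proj_rules = proj_nth proj_take

named_theorems definable_intros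

locale zf_params =
  fixes r :: "'a \<Rightarrow> 'a \<Rightarrow> bool" and pe :: "nat \<Rightarrow> 'a"
  assumes zf: "zf_model r"
begin

definition definable :: "nat \<Rightarrow> ('a list \<Rightarrow> bool) \<Rightarrow> bool" where
  "definable n R \<longleftrightarrow> (\<exists>\<phi>. \<forall>xs q. length xs = n \<longrightarrow> (\<forall>i. odd i \<longrightarrow> q i = pe i) \<longrightarrow>
      (sat r (list_env xs q) \<phi> \<longleftrightarrow> R xs))"

lemma definable_cong: "definable n P \<Longrightarrow> (\<And>xs. length xs = n \<Longrightarrow> P xs = Q xs) \<Longrightarrow> definable n Q"
  unfolding definable_def by metis

lemma definable_mem: "proj n f \<Longrightarrow> proj n g \<Longrightarrow> definable n (\<lambda>xs. r (f xs) (g xs))"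
  unfolding definable_def proj_def
  by (elim exE conjE, rule_tac x="Mem (2*i) (2*ia)" in exI) (auto simp: list_env_def)

lemma definable_eq: "proj n f \<Longrightarrow> proj n g \<Longrightarrow> definable n (\<lambda>xs. f xs = g xs)"
  unfolding definable_def proj_def
  by (elim exE conjE, rule_tac x="Eq (2*i) (2*ia)" in exI) (auto simp: list_env_def)

lemma definable_not: "definable n P \<Longrightarrow> definable n (\<lambda>xs. \<not> P xs)"
  unfolding definable_def by (elim exE, rule_tac x="Neg \<phi>" in exI) auto

lemma definable_conj: "definable n P \<Longrightarrow> definable n Q \<Longrightarrow> definable n (\<lambda>xs. P xs \<and> Q xs)"
  unfolding definable_def by (elim exE, rule_tac x="Conj \<phi> \<phi>'" in exI) auto

lemma definable_disj: "definable n P \<Longrightarrow> definable n Q \<Longrightarrow> definable n (\<lambda>xs. P xs \<or> Q xs)"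
  by (rule definable_cong[OF definable_not[OF definable_conj[OF definable_not definable_not]]]) auto

lemma definable_imp: "definable n P \<Longrightarrow> definable n Q \<Longrightarrow> definable n (\<lambda>xs. P xs \<longrightarrow> Q xs)"
  by (rule definable_cong[OF definable_disj[OF definable_not]]) auto

lemma definable_iff: "definable n P \<Longrightarrow> definable n Q \<Longrightarrow> definable n (\<lambda>xs. P xs \<longleftrightarrow> Q xs)"
proof -
  assume "definable n P" "definable n Q"
  then have "definable n (\<lambda>xs. (P xs \<longrightarrow> Q xs) \<and> (Q xs \<longrightarrow> P xs))"
    by (intro definable_conj definable_imp)
  then show ?thesis by (rule definable_cong) auto
qed

lemma definable_true: "definable n (\<lambda>xs. True)"
  unfolding definable_def by (rule exI[of _ "Eq 0 0"]) auto

lemma definable_false: "definable n (\<lambda>xs. False)"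
  unfolding definable_def by (rule exI[of _ "Neg (Eq 0 0)"]) auto

text \<open>A quantifier binds the next free argument position, which is variable \<open>2 * n\<close>.\<close>
lemma definable_ex:
  "definable (Suc n) (\<lambda>ys. P (take n ys) (ys ! n)) \<Longrightarrow> definable n (\<lambda>xs. \<exists>a. P xs a)"
  unfolding definable_def
proof (elim exE, intro exI allI impI)
  fix \<phi> and xs :: "'a list" and q
  assume def: "\<forall>xs q. length xs = Suc n \<longrightarrow> (\<forall>i. odd i \<longrightarrow> q i = pe i) \<longrightarrow>
               sat r (list_env xs q) \<phi> = P (take n xs) (xs ! n)"
    and len: "length xs = n" and q: "\<forall>i. odd i \<longrightarrow> q i = pe i"
  have "sat r (list_env xs q) (Ex (2*n) \<phi>) = (\<exists>a. sat r (list_env (xs @ [a]) q) \<phi>)"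
    using list_env_snoc[OF len] by simp
  also have "\<dots> = (\<exists>a. P xs a)" using def q len by auto
  finally show "sat r (list_env xs q) (Ex (2*n) \<phi>) = (\<exists>a. P xs a)" .
qed

lemma definable_all:
  "definable (Suc n) (\<lambda>ys. P (take n ys) (ys ! n)) \<Longrightarrow> definable n (\<lambda>xs. \<forall>a. P xs a)"
  by (rule definable_cong[OF definable_not[OF definable_ex[OF definable_not]]]) auto

text \<open>These are kept out of \<open>definable_intros\<close> and tried after it: trying \<open>definable_eq\<close> before
  the rules for specific set operations sends \<open>proj_take\<close> into an expensive higher-order search.\<close>
lemmas definable_logic = definable_mem definable_eq definable_not definable_conj definable_disj
  definable_imp definable_iff definable_true definable_false definable_ex definable_all

text \<open>Parameter \<open>i\<close> of \<open>\<phi>\<close> is read from the odd variable \<open>2 * i + 1\<close>.\<close>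
lemma definable_sat:
  "proj n f \<Longrightarrow> definable n (\<lambda>xs. sat r ((\<lambda>i. pe (Suc (2*i)))(m := f xs)) \<phi>)"
  unfolding definable_def proj_def
proof (elim exE conjE, intro exI allI impI)
  fix k and xs :: "'a list" and q
  assume k: "k < n" and f: "\<forall>xs. length xs = n \<longrightarrow> f xs = xs ! k"
    and len: "length xs = n" and q: "\<forall>i. odd i \<longrightarrow> q i = pe i"
  let ?g = "\<lambda>i::nat. Suc (2*i)"
  have inj: "inj ?g" by (auto simp: inj_def)
  have "2*k \<noteq> ?g m" by presburger
  then have "sat r (list_env xs q) (Ex (?g m) (Conj (Eq (?g m) (2*k)) (rename ?g \<phi>)))
     = (\<exists>a. a = xs ! k \<and> sat r (((list_env xs q)(?g m := a)) \<circ> ?g) \<phi>)"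
    using k len by (simp add: sat_rename[OF inj] list_env_def)
  also have "\<dots> = sat r ((\<lambda>i. pe (Suc (2*i)))(m := f xs)) \<phi>"
  proof -
    have "((list_env xs q)(?g m := xs!k)) \<circ> ?g = (\<lambda>i. pe (Suc (2*i)))(m := xs!k)"
      using len q by (auto simp: list_env_def)
    then show ?thesis using f len by simp
  qed
  finally show "sat r (list_env xs q) (Ex (?g m) (Conj (Eq (?g m) (2*k)) (rename ?g \<phi>))) =
      sat r ((\<lambda>i. pe (Suc (2*i)))(m := f xs)) \<phi>" .
qed

section \<open>Axioms and elementary set operations\<close>

lemma extensionality: "(\<And>z. r z x = r z y) \<Longrightarrow> x = y"
  using extensionality_ax[OF zf] by blast

lemma foundation: "r y x \<Longrightarrow> \<exists>y. r y x \<and> (\<forall>z. r z y \<longrightarrow> \<not> r z x)"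
  using foundation_ax[OF zf] by blast

lemma separation:
  assumes "definable (Suc n) R" and len: "length ps = n"
  shows "\<exists>y. \<forall>z. r z y \<longleftrightarrow> r z x \<and> R (ps @ [z])"
proof -
  obtain \<phi> where def: "\<And>xs q. length xs = Suc n \<Longrightarrow> (\<forall>i. odd i \<longrightarrow> q i = pe i) \<Longrightarrow>
      sat r (list_env xs q) \<phi> = R xs" using assms(1) unfolding definable_def by blast
  obtain y where y: "\<forall>z. r z y \<longleftrightarrow> r z x \<and> sat r ((list_env ps pe)(2*n := z)) \<phi>"
    using separation_ax[OF zf] by blast
  show ?thesis
    by (rule exI[of _ y]) (simp add: y list_env_snoc[OF len] def len)
qed

lemma replacement:
  assumes "definable (Suc (Suc n)) R" and len: "length ps = n"
    and single_valued: "\<And>u. r u x \<Longrightarrow> \<exists>!w. R (ps @ [u, w])"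
  shows "\<exists>y. \<forall>w. r w y \<longleftrightarrow> (\<exists>u. r u x \<and> R (ps @ [u, w]))"
proof -
  obtain \<phi> where def: "\<And>xs q. length xs = Suc (Suc n) \<Longrightarrow> (\<forall>i. odd i \<longrightarrow> q i = pe i) \<Longrightarrow>
      sat r (list_env xs q) \<phi> = R xs" using assms(1) unfolding definable_def by blast
  have env: "\<And>u w. (list_env ps pe)(2*n := u, 2*Suc n := w) = list_env (ps @ [u, w]) pe"
    using len list_env_snoc[of ps n pe] list_env_snoc[of "ps @ [_]" "Suc n" pe] by simp
  have sat: "\<And>u w. sat r ((list_env ps pe)(2*n := u, 2*Suc n := w)) \<phi> = R (ps @ [u, w])"
    unfolding env using len by (intro def) auto
  have "2*n \<noteq> 2*Suc n \<longrightarrow>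
        (\<forall>u. r u x \<longrightarrow> (\<exists>!w. sat r ((list_env ps pe)(2*n := u, 2*Suc n := w)) \<phi>)) \<longrightarrow>
        (\<exists>y. \<forall>w. r w y \<longleftrightarrow> (\<exists>u. r u x \<and> sat r ((list_env ps pe)(2*n := u, 2*Suc n := w)) \<phi>))"
    using replacement_ax[OF zf] by blast
  then show ?thesis using single_valued unfolding sat by auto
qed

definition is_set :: "('a \<Rightarrow> bool) \<Rightarrow> bool" where
  "is_set P \<longleftrightarrow> (\<exists>y. \<forall>z. r z y \<longleftrightarrow> P z)"

text \<open>Meaningful only when \<open>is_set P\<close>.\<close>
definition set_of :: "('a \<Rightarrow> bool) \<Rightarrow> 'a" where
  "set_of P = (THE y. \<forall>z. r z y \<longleftrightarrow> P z)"

lemma ex1_set: "is_set P \<Longrightarrow> \<exists>!y. \<forall>z. r z y \<longleftrightarrow> P z"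
  unfolding is_set_def by (metis extensionality)

lemma set_of_mem: "is_set P \<Longrightarrow> r z (set_of P) \<longleftrightarrow> P z"
  unfolding set_of_def by (drule ex1_set, drule theI') blast

lemma set_of_eq: "is_set P \<Longrightarrow> (y = set_of P) \<longleftrightarrow> (\<forall>z. r z y \<longleftrightarrow> P z)"
  using set_of_mem extensionality by metis

lemma is_set_sep:
  assumes "definable (Suc n) R" and "length ps = n" and "\<And>z. P z \<longleftrightarrow> R (ps @ [z])"
    and "\<And>z. P z \<Longrightarrow> r z x"
  shows "is_set P"
  using separation[OF assms(1,2), of x] assms(3,4) unfolding is_set_def by metis

definition empty_set :: 'a where "empty_set = set_of (\<lambda>z. False)"
definition upair :: "'a \<Rightarrow> 'a \<Rightarrow> 'a" where "upair a b = set_of (\<lambda>z. z = a \<or> z = b)"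
definition big_union :: "'a \<Rightarrow> 'a" where "big_union x = set_of (\<lambda>z. \<exists>y. r z y \<and> r y x)"
definition powerset :: "'a \<Rightarrow> 'a" where "powerset x = set_of (\<lambda>y. \<forall>z. r z y \<longrightarrow> r z x)"
definition succ :: "'a \<Rightarrow> 'a" where "succ a = set_of (\<lambda>z. r z a \<or> z = a)"
definition add_elem :: "'a \<Rightarrow> 'a \<Rightarrow> 'a" where "add_elem x a = set_of (\<lambda>z. r z x \<or> z = a)"
definition kpair :: "'a \<Rightarrow> 'a \<Rightarrow> 'a" where "kpair a b = upair (upair a a) (upair a b)"
definition dom_restrict :: "'a \<Rightarrow> 'a \<Rightarrow> 'a" where
  "dom_restrict f c = set_of (\<lambda>p. r p f \<and> (\<exists>a b. p = kpair a b \<and> r a c))"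

lemma is_set_empty_set: "is_set (\<lambda>z. False)"
  using definable_false by (rule is_set_sep[where ps="[]" and x=x]) auto

lemma empty_set_mem[simp]: "\<not> r z empty_set"
  unfolding empty_set_def using set_of_mem[OF is_set_empty_set] by simp

lemma is_set_upair: "is_set (\<lambda>z. z = a \<or> z = b)"
proof -
  obtain p where p: "r a p" "r b p" using pairing_ax[OF zf] by blast
  have "definable (Suc 2) (\<lambda>xs. xs!2 = xs!0 \<or> xs!2 = xs!1)"
    by (rule definable_intros definable_logic proj_rules | simp)+
  then show ?thesis by (rule is_set_sep[where ps="[a, b]" and x=p]) (auto simp: p)
qed

lemma upair_mem[simp]: "r z (upair a b) \<longleftrightarrow> z = a \<or> z = b"
  unfolding upair_def by (rule set_of_mem[OF is_set_upair])

lemma is_set_big_union: "is_set (\<lambda>z. \<exists>y. r z y \<and> r y x)"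
proof -
  obtain u where u: "\<forall>y z. r z y \<and> r y x \<longrightarrow> r z u" using union_ax[OF zf] by blast
  have "definable (Suc 1) (\<lambda>xs. \<exists>y. r (xs!1) y \<and> r y (xs!0))"
    by (rule definable_intros definable_logic proj_rules | simp)+
  then show ?thesis by (rule is_set_sep[where ps="[x]" and x=u]) (use u in auto)
qed

lemma big_union_mem[simp]: "r z (big_union x) \<longleftrightarrow> (\<exists>y. r z y \<and> r y x)"
  unfolding big_union_def by (rule set_of_mem[OF is_set_big_union])

lemma is_set_powerset: "is_set (\<lambda>y. \<forall>z. r z y \<longrightarrow> r z x)"
proof -
  obtain p where p: "\<forall>y. (\<forall>z. r z y \<longrightarrow> r z x) \<longrightarrow> r y p" using power_ax[OF zf] by blast
  have "definable (Suc 1) (\<lambda>xs. \<forall>z. r z (xs!1) \<longrightarrow> r z (xs!0))"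
    by (rule definable_intros definable_logic proj_rules | simp)+
  then show ?thesis by (rule is_set_sep[where ps="[x]" and x=p]) (use p in auto)
qed

lemma powerset_mem[simp]: "r y (powerset x) \<longleftrightarrow> (\<forall>z. r z y \<longrightarrow> r z x)"
  unfolding powerset_def by (rule set_of_mem[OF is_set_powerset])

lemma is_set_succ: "is_set (\<lambda>z. r z a \<or> z = a)"
proof -
  have "definable (Suc 1) (\<lambda>xs. r (xs!1) (xs!0) \<or> xs!1 = xs!0)"
    by (rule definable_intros definable_logic proj_rules | simp)+
  then show ?thesis
    by (rule is_set_sep[where ps="[a]" and x="big_union (upair a (upair a a))"])
      (simp_all, metis upair_mem)
qed

lemma succ_mem[simp]: "r z (succ a) \<longleftrightarrow> r z a \<or> z = a"
  unfolding succ_def by (rule set_of_mem[OF is_set_succ])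

lemma eq_succI: "(\<And>z. r z s \<longleftrightarrow> r z y \<or> z = y) \<Longrightarrow> s = succ y"
  by (intro extensionality) simp

lemma is_set_add_elem: "is_set (\<lambda>z. r z f \<or> z = p)"
proof -
  have "definable (Suc 2) (\<lambda>xs. r (xs!2) (xs!0) \<or> xs!2 = xs!1)"
    by (rule definable_intros definable_logic proj_rules | simp)+
  then show ?thesis
    by (rule is_set_sep[where ps="[f, p]" and x="big_union (upair f (upair p p))"])
      (simp_all, metis upair_mem)
qed

lemma add_elem_mem[simp]: "r z (add_elem f p) \<longleftrightarrow> r z f \<or> z = p"
  unfolding add_elem_def by (rule set_of_mem[OF is_set_add_elem])

lemma upair_eq_iff: "upair a b = upair c d \<longleftrightarrow> (a = c \<and> b = d) \<or> (a = d \<and> b = c)"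
proof
  assume "upair a b = upair c d"
  then have "\<And>z. (z = a \<or> z = b) \<longleftrightarrow> (z = c \<or> z = d)" by (metis upair_mem)
  then show "(a = c \<and> b = d) \<or> (a = d \<and> b = c)" by metis
next
  assume "(a = c \<and> b = d) \<or> (a = d \<and> b = c)"
  then show "upair a b = upair c d" by (auto intro: extensionality)
qed

lemma kpair_inject: "kpair a b = kpair c d \<longleftrightarrow> a = c \<and> b = d"
  unfolding kpair_def upair_eq_iff by auto

lemma kpair_snd_mem: "r c (upair a c)" "r (upair a c) (kpair a c)"
  by (auto simp: kpair_def)

lemma definable_set_of:
  assumes "definable n (\<lambda>xs. \<forall>z. r z (h xs) \<longleftrightarrow> P xs z)" and "\<And>xs. is_set (P xs)"
  shows "definable n (\<lambda>xs. h xs = set_of (P xs))"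
  using assms(1) by (rule definable_cong) (simp add: set_of_eq[OF assms(2)])

lemma definable_empty_set[definable_intros]:
  "proj n h \<Longrightarrow> definable n (\<lambda>xs. h xs = empty_set)"
  unfolding empty_set_def
  by (intro definable_set_of is_set_empty_set) (rule definable_intros definable_logic proj_rules | simp)+

lemma definable_upair[definable_intros]:
  "proj n f \<Longrightarrow> proj n g \<Longrightarrow> proj n h \<Longrightarrow> definable n (\<lambda>xs. h xs = upair (f xs) (g xs))"
  unfolding upair_def
  by (intro definable_set_of is_set_upair) (rule definable_intros definable_logic proj_rules | simp)+

lemma definable_succ[definable_intros]:
  "proj n f \<Longrightarrow> proj n h \<Longrightarrow> definable n (\<lambda>xs. h xs = succ (f xs))"
  unfolding succ_def
  by (intro definable_set_of is_set_succ) (rule definable_intros definable_logic proj_rules | simp)+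

lemma definable_add_elem[definable_intros]:
  "proj n f \<Longrightarrow> proj n g \<Longrightarrow> proj n h \<Longrightarrow> definable n (\<lambda>xs. h xs = add_elem (f xs) (g xs))"
  unfolding add_elem_def
  by (intro definable_set_of is_set_add_elem) (rule definable_intros definable_logic proj_rules | simp)+

lemma definable_kpair[definable_intros]:
  "proj n f \<Longrightarrow> proj n g \<Longrightarrow> proj n h \<Longrightarrow> definable n (\<lambda>xs. h xs = kpair (f xs) (g xs))"
proof -
  assume a: "proj n f" "proj n g" "proj n h"
  have "definable n (\<lambda>xs. \<exists>s t. s = upair (f xs) (f xs) \<and> t = upair (f xs) (g xs) \<and> h xs = upair s t)"
    by (rule definable_intros definable_logic proj_rules | simp add: a)+
  then show ?thesis by (rule definable_cong) (simp add: kpair_def)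
qed

lemma is_set_dom_restrict: "is_set (\<lambda>p. r p f \<and> (\<exists>a b. p = kpair a b \<and> r a c))"
proof -
  have "definable (Suc 2) (\<lambda>xs. r (xs!2) (xs!0) \<and> (\<exists>a b. xs!2 = kpair a b \<and> r a (xs!1)))"
    by (rule definable_intros definable_logic proj_rules | simp)+
  then show ?thesis by (rule is_set_sep[where ps="[f, c]" and x=f]) auto
qed

lemma dom_restrict_mem[simp]:
  "r p (dom_restrict f c) \<longleftrightarrow> r p f \<and> (\<exists>a b. p = kpair a b \<and> r a c)"
  unfolding dom_restrict_def by (rule set_of_mem[OF is_set_dom_restrict])

lemma definable_dom_restrict[definable_intros]:
  "proj n f \<Longrightarrow> proj n g \<Longrightarrow> proj n h \<Longrightarrow> definable n (\<lambda>xs. h xs = dom_restrict (f xs) (g xs))"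
  unfolding dom_restrict_def
  by (intro definable_set_of is_set_dom_restrict) (rule definable_intros definable_logic proj_rules | simp)+

section \<open>Ordinals\<close>

abbreviation Ord where "Ord \<equiv> zf_ordinal r"

lemma definable_Ord[definable_intros]: "proj n f \<Longrightarrow> definable n (\<lambda>xs. Ord (f xs))"
  unfolding zf_ordinal_def zf_transitive_def
  by (rule definable_intros definable_logic proj_rules | simp)+

lemma ord_trans: "Ord a \<Longrightarrow> r y a \<Longrightarrow> r z y \<Longrightarrow> r z a"
  unfolding zf_ordinal_def zf_transitive_def by blast

lemma ord_mem_irrefl: "Ord a \<Longrightarrow> r y a \<Longrightarrow> \<not> r y y"
  unfolding zf_ordinal_def by blast

lemma ord_mem_linear: "Ord a \<Longrightarrow> r y a \<Longrightarrow> r z a \<Longrightarrow> r y z \<or> y = z \<or> r z y"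
  unfolding zf_ordinal_def by blast

lemma ord_mem_wf:
  "Ord a \<Longrightarrow> r y s \<Longrightarrow> (\<And>y. r y s \<Longrightarrow> r y a) \<Longrightarrow> \<exists>m. r m s \<and> (\<forall>z. r z s \<longrightarrow> \<not> r z m)"
  unfolding zf_ordinal_def by blast

lemma ord_irrefl: "Ord a \<Longrightarrow> \<not> r a a"
  using ord_mem_irrefl by blast

lemma ord_mem_ord: "Ord a \<Longrightarrow> r b a \<Longrightarrow> Ord b"
  unfolding zf_ordinal_def zf_transitive_def by meson

lemma ord_definable_min:
  assumes a: "Ord a" and "definable (Suc n) R" and "length ps = n" and "r y a" and "R (ps @ [y])"
  shows "\<exists>m. r m a \<and> R (ps @ [m]) \<and> (\<forall>z. R (ps @ [z]) \<longrightarrow> \<not> r z m)"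
proof -
  obtain s where s: "\<forall>z. r z s \<longleftrightarrow> r z a \<and> R (ps @ [z])" using separation assms(2,3) by blast
  then obtain m where "r m s" "\<forall>z. r z s \<longrightarrow> \<not> r z m" using ord_mem_wf[OF a] assms(4,5) by blast
  then show ?thesis using s ord_trans[OF a] by blast
qed

lemma ord_least:
  assumes "definable (Suc n) R" and "length ps = n" and "R (ps @ [a])" and a: "Ord a"
  shows "\<exists>m. R (ps @ [m]) \<and> (\<forall>x. R (ps @ [x]) \<longrightarrow> \<not> r x m)"
proof (cases "\<exists>y. r y a \<and> R (ps @ [y])")
  case True
  then show ?thesis using ord_definable_min[OF a assms(1,2)] by blast
qed (use assms(3) in blast)

lemma ord_transitive_subset:
  assumes a: "Ord a" and sub: "\<And>z. r z c \<Longrightarrow> r z a" and c: "zf_transitive r c"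
  shows "c = a \<or> r c a"
proof (cases "\<exists>z. r z a \<and> \<not> r z c")
  case False
  then have "c = a" using sub by (intro extensionality) blast
  then show ?thesis ..
next
  case True
  have "definable (Suc 1) (\<lambda>xs. \<not> r (xs!1) (xs!0))"
    by (rule definable_intros definable_logic proj_rules | simp)+
  then obtain d where d: "r d a" "\<not> r d c" and min: "\<And>z. \<not> r z c \<Longrightarrow> \<not> r z d"
    using ord_definable_min[OF a, where ps="[c]"] True by fastforce
  have "d = c"
  proof (rule extensionality)
    fix z
    show "r z d = r z c"
    proof
      assume "r z d" then show "r z c" using min by blast
    next
      assume zc: "r z c"
      from ord_mem_linear[OF a sub[OF zc] d(1)] show "r z d"
        using c zc d(2) unfolding zf_transitive_def by blast
    qed
  qed
  then show ?thesis using d by simp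
qed

lemma ord_linear:
  assumes a: "Ord a" and b: "Ord b"
  shows "r a b \<or> a = b \<or> r b a"
proof -
  have def: "definable (Suc 1) (\<lambda>xs. r (xs!1) (xs!0))"
    by (rule definable_intros definable_logic proj_rules | simp)+
  obtain c where c: "\<forall>z. r z c \<longleftrightarrow> r z a \<and> r z b"
    using separation[OF def, where ps="[b]" and x=a] by auto
  have "zf_transitive r c"
    unfolding zf_transitive_def using c ord_trans[OF a] ord_trans[OF b] by blast
  then have "c = a \<or> r c a" and "c = b \<or> r c b"
    using ord_transitive_subset[OF a] ord_transitive_subset[OF b] c by blast+
  moreover have "\<not> (r c a \<and> r c b)"
    using c ord_mem_irrefl[OF a] by blast
  ultimately show ?thesis by auto
qed

lemma ord_if_transitive_of_ords:
  assumes x: "zf_transitive r x" and ords: "\<And>y. r y x \<Longrightarrow> Ord y"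
  shows "Ord x"
proof -
  have wf: "\<exists>m. r m s \<and> (\<forall>z. r z s \<longrightarrow> \<not> r z m)" if ys: "r y s" and sx: "\<forall>y. r y s \<longrightarrow> r y x" for s y
  proof (cases "\<exists>z. r z s \<and> r z y")
    case True
    have y: "Ord y" using ords sx ys by blast
    have "definable (Suc 1) (\<lambda>xs. r (xs!1) (xs!0))"
      by (rule definable_intros definable_logic proj_rules | simp)+
    then obtain m where "r m y" "r m s" "\<forall>z. r z s \<longrightarrow> \<not> r z m"
      using ord_definable_min[OF y, where ps="[s]"] True by fastforce
    then show ?thesis by blast
  qed (use ys in blast)
  show ?thesis
    unfolding zf_ordinal_def
  proof (intro conjI)
    show "\<forall>y. r y x \<longrightarrow> \<not> r y y" using ords ord_irrefl by blast
    show "\<forall>y z w. r y x \<and> r z x \<and> r w x \<and> r y z \<and> r z w \<longrightarrow> r y w"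
      using ords ord_trans by blast
    show "\<forall>y z. r y x \<and> r z x \<longrightarrow> r y z \<or> y = z \<or> r z y"
      using ords ord_linear by blast
  qed (use x wf in blast)+
qed

lemma Ord_succ:
  assumes a: "Ord a"
  shows "Ord (succ a)"
proof (rule ord_if_transitive_of_ords)
  show "zf_transitive r (succ a)" unfolding zf_transitive_def using ord_trans[OF a] by auto
  show "Ord y" if "r y (succ a)" for y using that a ord_mem_ord[OF a] by auto
qed

lemma Ord_empty_set: "Ord empty_set"
  by (rule ord_if_transitive_of_ords) (simp_all add: zf_transitive_def)

lemma Ord_big_union:
  assumes ords: "\<And>y. r y x \<Longrightarrow> Ord y"
  shows "Ord (big_union x)"
proof (rule ord_if_transitive_of_ords)
  show "zf_transitive r (big_union x)" unfolding zf_transitive_def using ords ord_trans by (simp, blast)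
  show "Ord y" if "r y (big_union x)" for y using that ords ord_mem_ord by (simp, blast)
qed

lemma empty_set_mem_ord:
  assumes a: "Ord a" and "r y a"
  shows "r empty_set a"
proof -
  obtain m where m: "r m a" "\<forall>z. r z a \<longrightarrow> \<not> r z m" using ord_mem_wf[OF a] assms(2) by blast
  have "m = empty_set" using m ord_trans[OF a, of m] by (intro extensionality) auto
  then show ?thesis using m by simp
qed

text \<open>Separate from an inductive set the ordinals that are subsets of it.\<close>
lemma inductive_ord_ex: "\<exists>L. Ord L \<and> r empty_set L \<and> (\<forall>z. r z L \<longrightarrow> r (succ z) L)"
proof -
  obtain I where I: "r empty_set I" "\<And>y. r y I \<Longrightarrow> r (succ y) I"
    using infinity_ax[OF zf] eq_succI by (metis empty_set_mem extensionality)
  have def: "definable (Suc 1) (\<lambda>xs. Ord (xs!1) \<and> (\<forall>w. r w (xs!1) \<longrightarrow> r w (xs!0)))"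
    by (rule definable_intros definable_logic proj_rules | simp)+
  obtain L where L: "\<forall>z. r z L \<longleftrightarrow> r z I \<and> (Ord z \<and> (\<forall>w. r w z \<longrightarrow> r w I))"
    using separation[OF def, where ps="[I]" and x=I] by auto
  have "Ord L"
  proof (rule ord_if_transitive_of_ords)
    show "zf_transitive r L"
      unfolding zf_transitive_def using L ord_mem_ord ord_trans by blast
  qed (use L in blast)
  moreover have "r empty_set L" using L I Ord_empty_set by auto
  moreover have "\<forall>z. r z L \<longrightarrow> r (succ z) L" using L I Ord_succ by auto
  ultimately show ?thesis by blast
qed

end

section \<open>Transfinite recursion\<close>

text \<open>\<open>G q f w\<close> says that \<open>w\<close> is the next value of a recursion with parameter \<open>q\<close>, given the
  function \<open>f\<close> (a set of Kuratowski pairs) computed on all smaller ordinals.\<close>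
locale zf_recursion = zf_params +
  fixes G :: "'a \<Rightarrow> 'a \<Rightarrow> 'a \<Rightarrow> bool"
  assumes definable_step: "\<And>n f g h. proj n f \<Longrightarrow> proj n g \<Longrightarrow> proj n h \<Longrightarrow>
      definable n (\<lambda>xs. G (f xs) (g xs) (h xs))"
    and step_fun: "\<And>q u. \<exists>!w. G q u w"
begin

declare definable_step[definable_intros]

definition rec_fun :: "'a \<Rightarrow> 'a \<Rightarrow> 'a \<Rightarrow> bool" where
  "rec_fun q f d \<longleftrightarrow> (\<forall>p. r p f \<longrightarrow> (\<exists>a b. p = kpair a b)) \<and>
     (\<forall>a b. r (kpair a b) f \<longrightarrow> r a d \<and> G q (dom_restrict f a) b) \<and>
     (\<forall>a. r a d \<longrightarrow> (\<exists>b. r (kpair a b) f))"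

lemma definable_rec_fun[definable_intros]:
  "proj n f1 \<Longrightarrow> proj n f2 \<Longrightarrow> proj n f3 \<Longrightarrow> definable n (\<lambda>xs. rec_fun (f1 xs) (f2 xs) (f3 xs))"
proof -
  assume a: "proj n f1" "proj n f2" "proj n f3"
  have "definable n (\<lambda>xs. (\<forall>p. r p (f2 xs) \<longrightarrow> (\<exists>a b. p = kpair a b)) \<and>
     (\<forall>a b p. p = kpair a b \<longrightarrow> r p (f2 xs) \<longrightarrow>
        r a (f3 xs) \<and> (\<exists>u. u = dom_restrict (f2 xs) a \<and> G (f1 xs) u b)) \<and>
     (\<forall>a. r a (f3 xs) \<longrightarrow> (\<exists>b p. p = kpair a b \<and> r p (f2 xs))))"
    by (rule definable_intros definable_logic proj_rules | simp add: a)+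
  then show ?thesis by (rule definable_cong) (auto simp: rec_fun_def)
qed

lemma step_unique: "G q u w \<Longrightarrow> G q u w' \<Longrightarrow> w = w'"
  using step_fun by blast

text \<open>At the least argument where \<open>f\<close> and \<open>g\<close> disagree, their restrictions coincide, so the
  step relation forces equal values.\<close>
lemma rec_fun_agree:
  assumes od: "Ord d" and od': "Ord d'" and f: "rec_fun q f d" and g: "rec_fun q g d'"
  shows "r (kpair a b) f \<Longrightarrow> r (kpair a b') g \<Longrightarrow> b = b'"
proof (rule ccontr)
  assume ab: "r (kpair a b) f" and ab': "r (kpair a b') g" and ne: "b \<noteq> b'"
  let ?R = "\<lambda>xs. \<exists>b b'. (\<exists>p. p = kpair (xs!2) b \<and> r p (xs!0)) \<and>
                        (\<exists>p. p = kpair (xs!2) b' \<and> r p (xs!1)) \<and> b \<noteq> b'"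
  have def: "definable (Suc 2) ?R" by (rule definable_intros definable_logic proj_rules | simp)+
  have ad: "r a d" using f ab unfolding rec_fun_def by blast
  have oa: "Ord a" using ord_mem_ord[OF od ad] .
  obtain m where m: "?R ([f,g] @ [m])" "\<forall>x. ?R ([f,g] @ [x]) \<longrightarrow> \<not> r x m"
    using ord_least[OF def, of "[f,g]" a] ab ab' ne oa by auto
  from m(1) obtain c c' where cc: "r (kpair m c) f" "r (kpair m c') g" "c \<noteq> c'" by auto
  have md: "r m d" and Gf: "G q (dom_restrict f m) c" using f cc unfolding rec_fun_def by blast+
  have md': "r m d'" and Gg: "G q (dom_restrict g m) c'" using g cc unfolding rec_fun_def by blast+
  have "dom_restrict f m = dom_restrict g m"
  proof (rule extensionality)
    fix p
    show "r p (dom_restrict f m) = r p (dom_restrict g m)"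
    proof
      assume "r p (dom_restrict f m)"
      then obtain e x where p: "r p f" "p = kpair e x" "r e m" by auto
      have "r e d'" using ord_trans[OF od' md' p(3)] .
      then obtain x' where x': "r (kpair e x') g" using g unfolding rec_fun_def by blast
      have "x = x'" using m(2) p x' by auto
      then show "r p (dom_restrict g m)" using p x' by auto
    next
      assume "r p (dom_restrict g m)"
      then obtain e x where p: "r p g" "p = kpair e x" "r e m" by auto
      have "r e d" using ord_trans[OF od md p(3)] .
      then obtain x' where x': "r (kpair e x') f" using f unfolding rec_fun_def by blast
      have "x = x'" using m(2) p x' by auto
      then show "r p (dom_restrict f m)" using p x' by auto
    qed
  qed
  then show False using Gf Gg cc(3) step_unique by metis
qed

lemma rec_fun_unique:
  assumes od: "Ord d" and f: "rec_fun q f d" and g: "rec_fun q g d"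
  shows "f = g"
proof (rule extensionality)
  fix p
  show "r p f = r p g"
  proof
    assume pf: "r p f"
    then obtain a b where p: "p = kpair a b" using f unfolding rec_fun_def by blast
    then have "r a d" using f pf unfolding rec_fun_def by blast
    then obtain b' where "r (kpair a b') g" using g unfolding rec_fun_def by blast
    then show "r p g" using rec_fun_agree[OF od od f g] pf p by metis
  next
    assume pg: "r p g"
    then obtain a b where p: "p = kpair a b" using g unfolding rec_fun_def by blast
    then have "r a d" using g pg unfolding rec_fun_def by blast
    then obtain b' where "r (kpair a b') f" using f unfolding rec_fun_def by blast
    then show "r p f" using rec_fun_agree[OF od od f g] pg p by metis
  qed
qed

lemma dom_restrict_rec_fun: "rec_fun q f a \<Longrightarrow> dom_restrict f a = f"
proof (rule extensionality)
  fix p assume f: "rec_fun q f a"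
  show "r p (dom_restrict f a) = r p f"
    using f unfolding rec_fun_def by (auto, metis)
qed

lemma rec_fun_restrict:
  assumes od: "Ord d" and f: "rec_fun q f d" and cd: "r c d"
  shows "rec_fun q (dom_restrict f c) c"
proof -
  have oc: "Ord c" using ord_mem_ord[OF od cd] .
  have rr: "dom_restrict (dom_restrict f c) a = dom_restrict f a" if ac: "r a c" for a
  proof (rule extensionality)
    fix p show "r p (dom_restrict (dom_restrict f c) a) = r p (dom_restrict f a)"
      using ord_trans[OF oc ac] ac by (auto simp: kpair_inject)
  qed
  show ?thesis unfolding rec_fun_def
  proof (intro conjI allI impI)
    fix p assume "r p (dom_restrict f c)" then show "\<exists>a b. p = kpair a b" by auto
  next
    fix a b assume h: "r (kpair a b) (dom_restrict f c)"
    then have ac: "r a c" by (auto simp: kpair_inject)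
    show "r a c" by (rule ac)
    have "G q (dom_restrict f a) b" using h f unfolding rec_fun_def by auto
    then show "G q (dom_restrict (dom_restrict f c) a) b" using rr[OF ac] by simp
  next
    fix a assume ac: "r a c"
    then have "r a d" using ord_trans[OF od cd] by blast
    then obtain b where "r (kpair a b) f" using f unfolding rec_fun_def by blast
    then show "\<exists>b. r (kpair a b) (dom_restrict f c)" using ac by auto
  qed
qed

lemma rec_fun_succ:
  assumes oa: "Ord a" and f: "rec_fun q f a" and w: "G q f w"
  shows "rec_fun q (add_elem f (kpair a w)) (succ a)"
proof -
  let ?h = "add_elem f (kpair a w)"
  have rr: "dom_restrict ?h c = dom_restrict f c" if c: "r c (succ a)" for c
  proof (rule extensionality)
    fix p
    have "\<not> r a c" using c ord_irrefl[OF oa] ord_trans[OF oa, of c a] by auto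
    then show "r p (dom_restrict ?h c) = r p (dom_restrict f c)" by (auto simp: kpair_inject)
  qed
  show ?thesis unfolding rec_fun_def
  proof (intro conjI allI impI)
    fix p assume "r p ?h" then show "\<exists>a b. p = kpair a b" using f unfolding rec_fun_def by auto
  next
    fix c b assume h: "r (kpair c b) ?h"
    show "r c (succ a)" using h f unfolding rec_fun_def by (auto simp: kpair_inject)
    then have "dom_restrict ?h c = dom_restrict f c" by (rule rr)
    moreover have "G q (dom_restrict f c) b"
    proof (cases "r (kpair c b) f")
      case True then show ?thesis using f unfolding rec_fun_def by blast
    next
      case False then have "c = a" "b = w" using h by (auto simp: kpair_inject)
      then show ?thesis using w dom_restrict_rec_fun[OF f] by simp
    qed
    ultimately show "G q (dom_restrict ?h c) b" by simp
  next
    fix c assume "r c (succ a)"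
    then show "\<exists>b. r (kpair c b) ?h" using f unfolding rec_fun_def by auto
  qed
qed

lemma rec_fun_big_union:
  assumes d: "Ord d"
    and Y: "\<And>h. r h Y \<Longrightarrow> \<exists>a. r a d \<and> rec_fun q h (succ a)"
    and cover: "\<And>a. r a d \<Longrightarrow> \<exists>h b. r h Y \<and> r (kpair a b) h"
  shows "rec_fun q (big_union Y) d"
proof -
  have succ_ord: "Ord (succ a)" if "r a d" for a using Ord_succ ord_mem_ord[OF d that] by blast
  have restrict_eq: "dom_restrict (big_union Y) c = dom_restrict h c"
    if h: "r h Y" "rec_fun q h (succ a)" "r a d" and c: "r c (succ a)" for h a c
  proof (rule extensionality)
    fix p show "r p (dom_restrict (big_union Y) c) = r p (dom_restrict h c)"
    proof
      assume "r p (dom_restrict (big_union Y) c)"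
      then obtain h' e x where p: "r p h'" "r h' Y" "p = kpair e x" "r e c" by auto
      obtain a' where a': "r a' d" "rec_fun q h' (succ a')" using Y[OF p(2)] by blast
      have "r e (succ a)" using ord_trans[OF succ_ord[OF h(3)] c p(4)] .
      then obtain x' where x': "r (kpair e x') h" using h(2) unfolding rec_fun_def by blast
      have "x = x'"
        using rec_fun_agree[OF succ_ord[OF a'(1)] succ_ord[OF h(3)] a'(2) h(2)] p x' by blast
      then show "r p (dom_restrict h c)" using p x' by auto
    next
      assume "r p (dom_restrict h c)" then show "r p (dom_restrict (big_union Y) c)" using h(1) by auto
    qed
  qed
  show ?thesis unfolding rec_fun_def
  proof (intro conjI allI impI)
    fix p assume "r p (big_union Y)"
    then obtain h where h: "r p h" "r h Y" by auto
    obtain a where "rec_fun q h (succ a)" using Y[OF h(2)] by blast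
    then show "\<exists>a b. p = kpair a b" using h(1) unfolding rec_fun_def by blast
  next
    fix c b assume "r (kpair c b) (big_union Y)"
    then obtain h where h: "r (kpair c b) h" "r h Y" by auto
    obtain a where a: "r a d" "rec_fun q h (succ a)" using Y[OF h(2)] by blast
    have c: "r c (succ a)" and step: "G q (dom_restrict h c) b"
      using h(1) a(2) unfolding rec_fun_def by blast+
    show "r c d" using c a(1) ord_trans[OF d] by auto
    show "G q (dom_restrict (big_union Y) c) b" using restrict_eq[OF h(2) a(2) a(1) c] step by simp
  next
    fix a assume "r a d"
    then obtain h b where "r h Y" "r (kpair a b) h" using cover by blast
    then show "\<exists>b. r (kpair a b) (big_union Y)" by auto
  qed
qed

text \<open>The successor extensions of the recursions below \<open>d\<close> form a set by replacement, and their
  union is the recursion along \<open>d\<close>.\<close>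
lemma rec_fun_of_smaller:
  assumes d: "Ord d" and below: "\<And>a. r a d \<Longrightarrow> \<exists>f. rec_fun q f a"
  shows "\<exists>f. rec_fun q f d"
proof -
  let ?H = "\<lambda>xs. \<exists>f w p. rec_fun (xs!0) f (xs!1) \<and> G (xs!0) f w \<and> p = kpair (xs!1) w \<and>
     xs!2 = add_elem f p"
  have def: "definable (Suc (Suc 1)) ?H"
    by (rule definable_intros definable_logic proj_rules | simp)+
  have single_valued: "\<exists>!h. ?H ([q] @ [a, h])" if a: "r a d" for a
  proof -
    obtain f where f: "rec_fun q f a" using below[OF a] by blast
    obtain w where w: "G q f w" using step_fun by blast
    show ?thesis
    proof (rule ex1I[of _ "add_elem f (kpair a w)"])
      show "?H ([q] @ [a, add_elem f (kpair a w)])" using f w by auto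
    next
      fix h assume "?H ([q] @ [a, h])"
      then obtain f' w' where "rec_fun q f' a" "G q f' w'" "h = add_elem f' (kpair a w')" by auto
      then show "h = add_elem f (kpair a w)"
        using rec_fun_unique[OF ord_mem_ord[OF d a] f] w step_unique by metis
    qed
  qed
  obtain Y where Y: "\<forall>h. r h Y \<longleftrightarrow> (\<exists>a. r a d \<and> ?H ([q] @ [a, h]))"
    using replacement[OF def, of "[q]" d] single_valued by auto
  have "rec_fun q (big_union Y) d"
  proof (rule rec_fun_big_union[OF d])
    fix h assume "r h Y"
    then obtain a f w where "r a d" "rec_fun q f a" "G q f w" "h = add_elem f (kpair a w)"
      using Y by auto
    then show "\<exists>a. r a d \<and> rec_fun q h (succ a)" using rec_fun_succ ord_mem_ord[OF d] by blast
  next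
    fix a assume a: "r a d"
    then obtain h where H: "?H ([q] @ [a, h])" using single_valued by blast
    then obtain f w where "h = add_elem f (kpair a w)" by auto
    moreover have "r h Y" using Y a H by blast
    ultimately show "\<exists>h b. r h Y \<and> r (kpair a b) h" by force
  qed
  then show ?thesis ..
qed

lemma rec_fun_ex:
  assumes "Ord d"
  shows "\<exists>f. rec_fun q f d"
proof (rule ccontr)
  assume "\<not> (\<exists>f. rec_fun q f d)"
  moreover have def: "definable (Suc 1) (\<lambda>xs. Ord (xs!1) \<and> \<not> (\<exists>f. rec_fun (xs!0) f (xs!1)))"
    by (rule definable_intros definable_logic proj_rules | simp)+
  ultimately obtain m where m: "Ord m" "\<not> (\<exists>f. rec_fun q f m)"
    and least: "\<And>x. Ord x \<Longrightarrow> \<not> (\<exists>f. rec_fun q f x) \<Longrightarrow> \<not> r x m"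
    using ord_least[OF def, of "[q]" d] assms by auto
  have "\<exists>f. rec_fun q f m"
    by (rule rec_fun_of_smaller[OF m(1)]) (use least ord_mem_ord[OF m(1)] in blast)
  with m(2) show False by blast
qed

definition rec_val :: "'a \<Rightarrow> 'a \<Rightarrow> 'a" where
  "rec_val q b = (THE w. \<exists>f. rec_fun q f (succ b) \<and> r (kpair b w) f)"

lemma rec_val_iff:
  assumes ob: "Ord b"
  shows "(\<exists>f. rec_fun q f (succ b) \<and> r (kpair b w) f) \<longleftrightarrow> w = rec_val q b"
proof -
  have os: "Ord (succ b)" using Ord_succ[OF ob] .
  obtain f where f: "rec_fun q f (succ b)" using rec_fun_ex[OF os] by blast
  obtain w0 where w0: "r (kpair b w0) f" using f unfolding rec_fun_def by auto
  have u: "(\<exists>f. rec_fun q f (succ b) \<and> r (kpair b w) f) \<longleftrightarrow> w = w0" for w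
  proof
    assume "\<exists>f. rec_fun q f (succ b) \<and> r (kpair b w) f"
    then obtain f' where "rec_fun q f' (succ b)" "r (kpair b w) f'" by blast
    then show "w = w0" using rec_fun_agree[OF os os _ f, of f' b w w0] w0 by blast
  next
    assume "w = w0" then show "\<exists>f. rec_fun q f (succ b) \<and> r (kpair b w) f" using f w0 by blast
  qed
  then have "rec_val q b = w0" unfolding rec_val_def by simp
  then show ?thesis using u by simp
qed

lemma rec_val_mem:
  assumes od: "Ord d" and f: "rec_fun q f d" and bd: "r b d"
  shows "r (kpair b (rec_val q b)) f"
proof -
  have ob: "Ord b" using ord_mem_ord[OF od bd] .
  obtain g where g: "rec_fun q g (succ b)" "r (kpair b (rec_val q b)) g" using rec_val_iff[OF ob] by blast
  obtain w where w: "r (kpair b w) f" using f bd unfolding rec_fun_def by blast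
  have "w = rec_val q b" using rec_fun_agree[OF od Ord_succ[OF ob] f g(1) w g(2)] .
  then show ?thesis using w by simp
qed

lemma rec_val_step:
  assumes ob: "Ord b" and f: "rec_fun q f b"
  shows "G q f (rec_val q b)"
proof -
  obtain g where g: "rec_fun q g (succ b)" "r (kpair b (rec_val q b)) g" using rec_val_iff[OF ob] by blast
  have "G q (dom_restrict g b) (rec_val q b)" using g unfolding rec_fun_def by blast
  moreover have "dom_restrict g b = f"
    using rec_fun_unique[OF ob rec_fun_restrict[OF Ord_succ[OF ob] g(1)] f] by simp
  ultimately show ?thesis by simp
qed

lemma definable_rec_val[definable_intros]: "proj n f1 \<Longrightarrow> proj n f2 \<Longrightarrow> proj n f3 \<Longrightarrow>
  definable n (\<lambda>xs. Ord (f2 xs) \<and> f3 xs = rec_val (f1 xs) (f2 xs))"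
proof -
  assume a: "proj n f1" "proj n f2" "proj n f3"
  have "definable n (\<lambda>xs. Ord (f2 xs) \<and>
      (\<exists>s f p. s = succ (f2 xs) \<and> rec_fun (f1 xs) f s \<and> p = kpair (f2 xs) (f3 xs) \<and> r p f))"
    by (rule definable_intros definable_logic proj_rules | simp add: a)+
  then show ?thesis by (rule definable_cong) (use rec_val_iff in auto)
qed

end

section \<open>The cumulative hierarchy and ranks\<close>

context zf_params begin

text \<open>\<open>V\<^sub>\<beta> = \<Union>\<^sub>\<gamma>\<^sub><\<^sub>\<beta> \<P>(V\<^sub>\<gamma>)\<close>.\<close>
definition V_step :: "'a \<Rightarrow> 'a \<Rightarrow> 'a \<Rightarrow> bool" where
  "V_step q f b \<longleftrightarrow> (\<forall>z. r z b \<longleftrightarrow> (\<exists>a c. r (kpair a c) f \<and> (\<forall>w. r w z \<longrightarrow> r w c)))"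

text \<open>\<open>T\<^sub>\<beta> = {q} \<union> \<Union>\<^sub>\<gamma>\<^sub><\<^sub>\<beta> \<Union>T\<^sub>\<gamma>\<close>; the union of the \<open>T\<^sub>n\<close> for \<open>n < \<omega>\<close> is transitive.\<close>
definition tc_step :: "'a \<Rightarrow> 'a \<Rightarrow> 'a \<Rightarrow> bool" where
  "tc_step q f b \<longleftrightarrow> (\<forall>z. r z b \<longleftrightarrow> (z = q \<or> (\<exists>a c w. r (kpair a c) f \<and> r z w \<and> r w c)))"

lemma V_step_fun: "\<exists>!w. V_step q u w"
proof -
  have "definable (Suc 1)
      (\<lambda>xs. \<exists>a c. (\<exists>p. p = kpair a c \<and> r p (xs!0)) \<and> (\<forall>w. r w (xs!1) \<longrightarrow> r w c))"
    by (rule definable_intros definable_logic proj_rules | simp)+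
  then have "is_set (\<lambda>z. \<exists>a c. r (kpair a c) u \<and> (\<forall>w. r w z \<longrightarrow> r w c))"
    by (rule is_set_sep[where ps="[u]" and x="powerset (big_union (big_union (big_union u)))"])
      (use kpair_snd_mem in \<open>simp_all, blast\<close>)
  then show ?thesis unfolding V_step_def by (rule ex1_set)
qed

lemma tc_step_fun: "\<exists>!w. tc_step q u w"
proof -
  have "definable (Suc 2) (\<lambda>xs. xs!2 = xs!1 \<or>
      (\<exists>a c w. (\<exists>p. p = kpair a c \<and> r p (xs!0)) \<and> r (xs!2) w \<and> r w c))"
    by (rule definable_intros definable_logic proj_rules | simp)+
  then have "is_set (\<lambda>z. z = q \<or> (\<exists>a c w. r (kpair a c) u \<and> r z w \<and> r w c))"
    by (rule is_set_sep[where ps="[u, q]"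
          and x="add_elem (big_union (big_union (big_union (big_union u)))) q"])
      (use kpair_snd_mem in \<open>simp_all, blast\<close>)
  then show ?thesis unfolding tc_step_def by (rule ex1_set)
qed

lemma definable_V_step:
  "proj n f \<Longrightarrow> proj n g \<Longrightarrow> proj n h \<Longrightarrow> definable n (\<lambda>xs. V_step (f xs) (g xs) (h xs))"
proof -
  assume a: "proj n f" "proj n g" "proj n h"
  have "definable n (\<lambda>xs. \<forall>z. r z (h xs) \<longleftrightarrow>
      (\<exists>a c. (\<exists>p. p = kpair a c \<and> r p (g xs)) \<and> (\<forall>w. r w z \<longrightarrow> r w c)))"
    by (rule definable_intros definable_logic proj_rules | simp add: a)+
  then show ?thesis by (rule definable_cong) (auto simp: V_step_def)
qed

lemma definable_tc_step:
  "proj n f \<Longrightarrow> proj n g \<Longrightarrow> proj n h \<Longrightarrow> definable n (\<lambda>xs. tc_step (f xs) (g xs) (h xs))"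
proof -
  assume a: "proj n f" "proj n g" "proj n h"
  have "definable n (\<lambda>xs. \<forall>z. r z (h xs) \<longleftrightarrow>
      (z = f xs \<or> (\<exists>a c w. (\<exists>p. p = kpair a c \<and> r p (g xs)) \<and> r z w \<and> r w c)))"
    by (rule definable_intros definable_logic proj_rules | simp add: a)+
  then show ?thesis by (rule definable_cong) (auto simp: tc_step_def)
qed

end

sublocale zf_params \<subseteq> V_rec: zf_recursion r pe V_step
  by standard (fact definable_V_step V_step_fun)+

sublocale zf_params \<subseteq> tc_rec: zf_recursion r pe tc_step
  by standard (fact definable_tc_step tc_step_fun)+

context zf_params begin

definition V_level :: "'a \<Rightarrow> 'a" where "V_level b = V_rec.rec_val empty_set b"

lemma V_level_mem:
  assumes ob: "Ord b"
  shows "r z (V_level b) \<longleftrightarrow> (\<exists>c. r c b \<and> (\<forall>w. r w z \<longrightarrow> r w (V_level c)))"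
proof -
  obtain f where f: "V_rec.rec_fun empty_set f b" using V_rec.rec_fun_ex[OF ob] by blast
  have G: "V_step empty_set f (V_level b)" unfolding V_level_def using V_rec.rec_val_step[OF ob f] .
  have val: "r (kpair a c) f \<longleftrightarrow> r a b \<and> c = V_level a" for a c
  proof
    assume ac: "r (kpair a c) f"
    then have ab: "r a b" using f unfolding V_rec.rec_fun_def by blast
    have "r (kpair a (V_level a)) f" unfolding V_level_def using V_rec.rec_val_mem[OF ob f ab] .
    then have "c = V_level a" using V_rec.rec_fun_agree[OF ob ob f f ac] by simp
    then show "r a b \<and> c = V_level a" using ab by simp
  next
    assume "r a b \<and> c = V_level a"
    then show "r (kpair a c) f" unfolding V_level_def using V_rec.rec_val_mem[OF ob f] by blast
  qed
  show ?thesis using G unfolding V_step_def val by blast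
qed

definition is_V_level :: "'a \<Rightarrow> 'a \<Rightarrow> bool" where "is_V_level b v \<longleftrightarrow> Ord b \<and> v = V_level b"

lemma definable_is_V_level[definable_intros]:
  "proj n f \<Longrightarrow> proj n h \<Longrightarrow> definable n (\<lambda>xs. is_V_level (f xs) (h xs))"
proof -
  assume a: "proj n f" "proj n h"
  have "definable n (\<lambda>xs. \<exists>e. e = empty_set \<and> Ord (f xs) \<and> h xs = V_rec.rec_val e (f xs))"
    by (rule definable_intros definable_logic proj_rules | simp add: a)+
  then show ?thesis by (rule definable_cong) (simp add: is_V_level_def V_level_def)
qed

lemma transitive_superset_ex: "\<exists>T. zf_transitive r T \<and> r x T"
proof -
  obtain L where L: "Ord L" "r empty_set L" "\<And>z. r z L \<Longrightarrow> r (succ z) L"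
    using inductive_ord_ex by blast
  obtain f where f: "tc_rec.rec_fun x f L" using tc_rec.rec_fun_ex[OF L(1)] by blast
  have def: "definable (Suc 1) (\<lambda>xs. \<exists>a c. (\<exists>p. p = kpair a c \<and> r p (xs!0)) \<and> r (xs!1) c)"
    by (rule definable_intros definable_logic proj_rules | simp)+
  obtain T where T: "\<forall>z. r z T \<longleftrightarrow>
      r z (big_union (big_union (big_union f))) \<and> (\<exists>a c. (\<exists>p. p = kpair a c \<and> r p f) \<and> r z c)"
    using separation[OF def, of "[f]" "big_union (big_union (big_union f))"] by auto
  have T_mem: "r z T \<longleftrightarrow> (\<exists>a c. r (kpair a c) f \<and> r z c)" for z
    using T kpair_snd_mem by (simp, blast)
  have "r x T"
  proof -
    obtain c where "r (kpair empty_set c) f" using f L(2) unfolding tc_rec.rec_fun_def by blast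
    moreover from this have "tc_step x (dom_restrict f empty_set) c"
      using f unfolding tc_rec.rec_fun_def by blast
    ultimately show ?thesis unfolding T_mem tc_step_def by blast
  qed
  moreover have "zf_transitive r T" unfolding zf_transitive_def
  proof (intro allI impI, elim conjE)
    fix w z assume wz: "r w z" and zT: "r z T"
    then obtain a c where ac: "r (kpair a c) f" "r z c" using T_mem by blast
    have aL: "r a L" using ac f unfolding tc_rec.rec_fun_def by blast
    obtain c' where c': "r (kpair (succ a) c') f"
      using f L(3)[OF aL] unfolding tc_rec.rec_fun_def by blast
    then have "tc_step x (dom_restrict f (succ a)) c'" using f unfolding tc_rec.rec_fun_def by blast
    moreover have "r (kpair a c) (dom_restrict f (succ a))" using ac by auto
    ultimately have "r w c'" unfolding tc_step_def using wz ac by blast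
    then show "r w T" using c' T_mem by blast
  qed
  ultimately show ?thesis by blast
qed

definition is_rank :: "'a \<Rightarrow> 'a \<Rightarrow> bool" where
  "is_rank x p \<longleftrightarrow> Ord p \<and> (\<forall>w. r w x \<longrightarrow> r w (V_level p)) \<and>
     (\<forall>c. r c p \<longrightarrow> \<not> (\<forall>w. r w x \<longrightarrow> r w (V_level c)))"

lemma definable_is_rank[definable_intros]:
  "proj n f \<Longrightarrow> proj n g \<Longrightarrow> definable n (\<lambda>xs. is_rank (f xs) (g xs))"
proof -
  assume a: "proj n f" "proj n g"
  have "definable n (\<lambda>xs. Ord (g xs) \<and> (\<exists>v. is_V_level (g xs) v \<and> (\<forall>w. r w (f xs) \<longrightarrow> r w v)) \<and>
     (\<forall>c. r c (g xs) \<longrightarrow> \<not> (\<exists>v. is_V_level c v \<and> (\<forall>w. r w (f xs) \<longrightarrow> r w v))))"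
    by (rule definable_intros definable_logic proj_rules | simp add: a)+
  then show ?thesis
    by (rule definable_cong) (unfold is_rank_def is_V_level_def, use ord_mem_ord in blast)
qed

lemma rank_unique: "is_rank x a \<Longrightarrow> is_rank x b \<Longrightarrow> a = b"
  unfolding is_rank_def using ord_linear by blast

lemma rank_ex_if_bounded:
  assumes "Ord b" and "\<forall>w. r w x \<longrightarrow> r w (V_level b)"
  shows "\<exists>p. is_rank x p"
proof -
  have def: "definable (Suc 1) (\<lambda>xs. Ord (xs!1) \<and> (\<exists>v. is_V_level (xs!1) v \<and> (\<forall>w. r w (xs!0) \<longrightarrow> r w v)))"
    by (rule definable_intros definable_logic proj_rules | simp)+
  obtain m where "Ord m" "\<forall>w. r w x \<longrightarrow> r w (V_level m)"
    and "\<forall>c. Ord c \<longrightarrow> (\<forall>w. r w x \<longrightarrow> r w (V_level c)) \<longrightarrow> \<not> r c m"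
    using ord_least[OF def, of "[x]" b] assms by (auto simp: is_V_level_def)
  then have "is_rank x m" unfolding is_rank_def using ord_mem_ord[of m] by blast
  then show ?thesis ..
qed

lemma mem_V_level_succ: "Ord p \<Longrightarrow> (\<forall>w. r w x \<longrightarrow> r w (V_level p)) \<Longrightarrow> r x (V_level (succ p))"
  using V_level_mem[OF Ord_succ] by auto

text \<open>By replacement, the successors of the ranks of the elements of \<open>z\<close> form a set; its union
  bounds them all.\<close>
lemma bounded_if_elems_ranked:
  assumes ranked: "\<And>w. r w z \<Longrightarrow> \<exists>p. is_rank w p"
  shows "\<exists>b. Ord b \<and> (\<forall>w. r w z \<longrightarrow> r w (V_level b))"
proof -
  let ?S = "\<lambda>xs. \<exists>p. is_rank (xs!0) p \<and> xs!1 = succ p"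
  have def: "definable (Suc (Suc 0)) ?S"
    by (rule definable_intros definable_logic proj_rules | simp)+
  have "\<exists>!y. ?S ([] @ [w, y])" if "r w z" for w
    using ranked[OF that] rank_unique by auto
  then obtain Y where Y: "\<forall>y. r y Y \<longleftrightarrow> (\<exists>w. r w z \<and> ?S ([] @ [w, y]))"
    using replacement[OF def, of "[]" z] by auto
  have U: "Ord (big_union Y)"
  proof (rule Ord_big_union)
    fix y assume "r y Y"
    then obtain w p where "is_rank w p" "y = succ p" using Y by auto
    then show "Ord y" using Ord_succ unfolding is_rank_def by auto
  qed
  have "r w (V_level (big_union Y))" if w: "r w z" for w
  proof -
    obtain p where p: "is_rank w p" using ranked[OF w] by blast
    have "r (succ p) Y" using Y w p by auto
    then have "r p (big_union Y)" using succ_mem big_union_mem by blast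
    then show ?thesis unfolding V_level_mem[OF U] using p unfolding is_rank_def by blast
  qed
  with U show ?thesis by blast
qed

text \<open>A minimal element, by foundation, of the unbounded elements of a transitive set containing
  \<open>x\<close> would have all its elements ranked.\<close>
lemma subset_V_level_ex: "\<exists>b. Ord b \<and> (\<forall>w. r w x \<longrightarrow> r w (V_level b))"
proof (rule ccontr)
  let ?unbounded = "\<lambda>z. \<not> (\<exists>b. Ord b \<and> (\<forall>w. r w z \<longrightarrow> r w (V_level b)))"
  assume "?unbounded x"
  obtain T where T: "zf_transitive r T" "r x T" using transitive_superset_ex by blast
  have def: "definable (Suc 0) (\<lambda>xs. \<not> (\<exists>b v. is_V_level b v \<and> (\<forall>w. r w (xs!0) \<longrightarrow> r w v)))"
    by (rule definable_intros definable_logic proj_rules | simp)+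
  obtain B where B: "\<forall>z. r z B \<longleftrightarrow> r z T \<and> ?unbounded z"
    using separation[OF def, of "[]" T] by (auto simp: is_V_level_def)
  have "r x B" using B T \<open>?unbounded x\<close> by blast
  then obtain z where z: "r z B" "\<forall>w. r w z \<longrightarrow> \<not> r w B" using foundation by blast
  have "\<exists>p. is_rank w p" if w: "r w z" for w
  proof -
    have "r w T" using T(1) z(1) B w unfolding zf_transitive_def by blast
    then show ?thesis using z(2) w B rank_ex_if_bounded by blast
  qed
  then show False using bounded_if_elems_ranked z(1) B by blast
qed

lemma rank_ex: "\<exists>p. is_rank x p"
  using subset_V_level_ex rank_ex_if_bounded by blast

end

section \<open>Enumerating the ranks of a proper class\<close>

locale zf_proper_class = zf_params +
  fixes m :: nat and \<phi> :: form
  assumes proper: "proper_class r {z. sat r ((\<lambda>i. pe (Suc (2*i)))(m := z)) \<phi>}"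
begin

definition in_C :: "'a \<Rightarrow> bool" where "in_C z \<longleftrightarrow> sat r ((\<lambda>i. pe (Suc (2*i)))(m := z)) \<phi>"

lemma definable_in_C[definable_intros]: "proj n f \<Longrightarrow> definable n (\<lambda>xs. in_C (f xs))"
  unfolding in_C_def by (rule definable_sat)

lemma C_not_subset: "\<exists>x. in_C x \<and> \<not> r x W"
proof (rule ccontr)
  assume "\<not> (\<exists>x. in_C x \<and> \<not> r x W)"
  moreover have def: "definable (Suc 0) (\<lambda>xs. in_C (xs!0))"
    by (rule definable_intros definable_logic proj_rules | simp)+
  ultimately obtain s where "\<forall>z. r z s \<longleftrightarrow> in_C z"
    using separation[OF def, of "[]" W] by auto
  then show False using proper unfolding proper_class_def in_C_def by auto
qed

definition free_rank :: "'a \<Rightarrow> 'a \<Rightarrow> bool" where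
  "free_rank f p \<longleftrightarrow> \<not> (\<exists>a. r (kpair a p) f) \<and> (\<exists>x. in_C x \<and> is_rank x p)"

definition least_free_rank :: "'a \<Rightarrow> 'a \<Rightarrow> 'a \<Rightarrow> bool" where
  "least_free_rank q f b \<longleftrightarrow> free_rank f b \<and> (\<forall>p. free_rank f p \<longrightarrow> \<not> r p b)"

lemma definable_free_rank[definable_intros]:
  "proj n f \<Longrightarrow> proj n g \<Longrightarrow> definable n (\<lambda>xs. free_rank (f xs) (g xs))"
proof -
  assume a: "proj n f" "proj n g"
  have "definable n (\<lambda>xs. \<not> (\<exists>a p. p = kpair a (g xs) \<and> r p (f xs)) \<and>
      (\<exists>x. in_C x \<and> is_rank x (g xs)))"
    by (rule definable_intros definable_logic proj_rules | simp add: a)+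
  then show ?thesis by (rule definable_cong) (auto simp: free_rank_def)
qed

lemma definable_least_free_rank:
  "proj n f \<Longrightarrow> proj n g \<Longrightarrow> proj n h \<Longrightarrow> definable n (\<lambda>xs. least_free_rank (f xs) (g xs) (h xs))"
  unfolding least_free_rank_def by (rule definable_intros definable_logic proj_rules | simp)+

lemma free_rank_Ord: "free_rank f p \<Longrightarrow> Ord p"
  unfolding free_rank_def is_rank_def by blast

lemma V_levels_above_range: "\<exists>Y. \<forall>a p. r (kpair a p) f \<longrightarrow> Ord p \<longrightarrow> r (V_level (succ p)) Y"
proof -
  let ?Q = "\<lambda>xs. (\<exists>a p s. xs!1 = kpair a p \<and> Ord p \<and> s = succ p \<and> is_V_level s (xs!2)) \<or>
                 (\<not> (\<exists>a p. xs!1 = kpair a p \<and> Ord p) \<and> xs!2 = empty_set)"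
  have def: "definable (Suc (Suc 1)) ?Q"
    by (rule definable_intros definable_logic proj_rules | simp)+
  have "\<exists>!y. ?Q ([f] @ [u, y])" for u
  proof (cases "\<exists>a p. u = kpair a p \<and> Ord p")
    case True
    then obtain a p where ap: "u = kpair a p" "Ord p" by blast
    show ?thesis
    proof (rule ex1I[of _ "V_level (succ p)"])
      show "?Q ([f] @ [u, V_level (succ p)])" using ap Ord_succ by (auto simp: is_V_level_def)
      fix y assume "?Q ([f] @ [u, y])"
      then show "y = V_level (succ p)" using ap by (auto simp: is_V_level_def kpair_inject)
    qed
  qed auto
  then obtain Y where Y: "\<forall>y. r y Y \<longleftrightarrow> (\<exists>u. r u f \<and> ?Q ([f] @ [u, y]))"
    using replacement[OF def, of "[f]" f] by auto
  have "r (V_level (succ p)) Y" if "r (kpair a p) f" "Ord p" for a p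
  proof -
    have "?Q ([f] @ [kpair a p, V_level (succ p)])"
      using that(2) Ord_succ by (auto simp: is_V_level_def)
    then show ?thesis using Y that(1) by blast
  qed
  then show ?thesis by blast
qed

text \<open>Since the ranks of a set of pairs are bounded, a proper class has elements of higher rank.\<close>
lemma free_rank_ex: "\<exists>p. free_rank f p"
proof -
  obtain Y where Y: "\<And>a p. r (kpair a p) f \<Longrightarrow> Ord p \<Longrightarrow> r (V_level (succ p)) Y"
    using V_levels_above_range by blast
  obtain x where x: "in_C x" "\<not> r x (big_union Y)" using C_not_subset by blast
  obtain p where p: "is_rank x p" using rank_ex by blast
  then have p_ord: "Ord p" unfolding is_rank_def by blast
  have "\<not> r (kpair a p) f" for a
  proof
    assume "r (kpair a p) f"
    then have "r (V_level (succ p)) Y" using Y p_ord by blast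
    moreover have "r x (V_level (succ p))"
      using mem_V_level_succ[OF p_ord] p unfolding is_rank_def by blast
    ultimately show False using x(2) by auto
  qed
  then show ?thesis unfolding free_rank_def using x p by blast
qed

lemma least_free_rank_fun: "\<exists>!w. least_free_rank q u w"
proof -
  obtain p where p: "free_rank u p" using free_rank_ex by blast
  have def: "definable (Suc 1) (\<lambda>xs. free_rank (xs!0) (xs!1))"
    by (rule definable_intros definable_logic proj_rules | simp)+
  obtain m where m: "free_rank u m" "\<forall>x. free_rank u x \<longrightarrow> \<not> r x m"
    using ord_least[OF def, of "[u]" p] p free_rank_Ord by auto
  show ?thesis
  proof (rule ex1I[of _ m])
    show "least_free_rank q u m" unfolding least_free_rank_def using m by blast
    fix w assume "least_free_rank q u w"
    then have "free_rank u w" "\<forall>x. free_rank u x \<longrightarrow> \<not> r x w" unfolding least_free_rank_def by auto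
    then show "w = m" using ord_linear[OF free_rank_Ord free_rank_Ord] m by blast
  qed
qed

end

sublocale zf_proper_class \<subseteq> enum_rec: zf_recursion r pe least_free_rank
  by standard (fact definable_least_free_rank least_free_rank_fun)+

context zf_proper_class begin

lemma enum_rank_inj:
  assumes \<alpha>: "Ord \<alpha>" and E: "enum_rec.rec_fun q E \<alpha>"
    and b: "r (kpair b p) E" and b': "r (kpair b' p) E"
  shows "b = b'"
proof (rule ccontr)
  assume "b \<noteq> b'"
  have in_\<alpha>: "r b \<alpha>" "r b' \<alpha>" and free: "free_rank (dom_restrict E b) p" "free_rank (dom_restrict E b') p"
    using E b b' unfolding enum_rec.rec_fun_def least_free_rank_def by blast+
  from ord_mem_linear[OF \<alpha> in_\<alpha>] \<open>b \<noteq> b'\<close> consider "r b b'" | "r b' b" by blast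
  then show False
  proof cases
    case 1
    then have "r (kpair b p) (dom_restrict E b')" using b by auto
    then show False using free(2) unfolding free_rank_def by blast
  next
    case 2
    then have "r (kpair b' p) (dom_restrict E b)" using b' by auto
    then show False using free(1) unfolding free_rank_def by blast
  qed
qed

text \<open>The graph of the surjection; elements of \<open>C\<close> whose rank is not enumerated below \<open>\<alpha>\<close> are sent
  to \<open>0\<close>.\<close>
definition surj_graph :: "'a \<Rightarrow> 'a \<Rightarrow> 'a \<Rightarrow> 'a \<Rightarrow> bool" where
  "surj_graph x y \<alpha> E \<longleftrightarrow> (r y \<alpha> \<and> (\<exists>p. is_rank x p \<and> r (kpair y p) E)) \<or>
     (\<not> (\<exists>b. r b \<alpha> \<and> (\<exists>p. is_rank x p \<and> r (kpair b p) E)) \<and> y = empty_set)"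

lemma definable_surj_graph: "definable 4 (\<lambda>xs. surj_graph (xs!0) (xs!1) (xs!2) (xs!3))"
proof -
  have "definable 4 (\<lambda>xs.
      (r (xs!1) (xs!2) \<and> (\<exists>p. is_rank (xs!0) p \<and> (\<exists>q. q = kpair (xs!1) p \<and> r q (xs!3)))) \<or>
      (\<not> (\<exists>b. r b (xs!2) \<and> (\<exists>p. is_rank (xs!0) p \<and> (\<exists>q. q = kpair b p \<and> r q (xs!3)))) \<and>
        xs!1 = empty_set))"
    by (rule definable_intros definable_logic proj_rules | simp)+
  then show ?thesis by (rule definable_cong) (simp add: surj_graph_def)
qed

context
  fixes \<alpha> E
  assumes \<alpha>: "Ord \<alpha>" and E: "enum_rec.rec_fun empty_set E \<alpha>"
begin

lemma surj_graph_unique: "\<exists>!y. surj_graph x y \<alpha> E"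
proof -
  obtain p where p: "is_rank x p" using rank_ex by blast
  have rank: "is_rank x p' \<longleftrightarrow> p' = p" for p' using rank_unique p by blast
  show ?thesis
  proof (cases "\<exists>b. r b \<alpha> \<and> r (kpair b p) E")
    case True
    then obtain b where "r b \<alpha>" "r (kpair b p) E" by blast
    then show ?thesis
      unfolding surj_graph_def rank using enum_rank_inj[OF \<alpha> E] by blast
  next
    case False
    then show ?thesis unfolding surj_graph_def rank by blast
  qed
qed

lemma surj_graph_into: "\<exists>z. r z \<alpha> \<Longrightarrow> surj_graph x y \<alpha> E \<Longrightarrow> r y \<alpha>"
  unfolding surj_graph_def using empty_set_mem_ord[OF \<alpha>] by blast

lemma surj_graph_onto:
  assumes y: "r y \<alpha>"
  shows "\<exists>x. in_C x \<and> surj_graph x y \<alpha> E"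
proof -
  obtain p where p: "r (kpair y p) E" using E y unfolding enum_rec.rec_fun_def by blast
  then have "free_rank (dom_restrict E y) p"
    using E unfolding enum_rec.rec_fun_def least_free_rank_def by blast
  then obtain x where "in_C x" "is_rank x p" unfolding free_rank_def by blast
  then show ?thesis unfolding surj_graph_def using y p by blast
qed

end

theorem class_surj_onto_ordinal:
  assumes \<alpha>: "Ord \<alpha>" and nonzero: "\<exists>y. r y \<alpha>"
  shows "\<exists>\<psi> e' i j. i \<noteq> j \<and> class_surj_onto r {z. in_C z} \<psi> e' i j \<alpha>"
proof -
  obtain E where E: "enum_rec.rec_fun empty_set E \<alpha>" using enum_rec.rec_fun_ex[OF \<alpha>] by blast
  obtain \<psi> where \<psi>: "\<And>xs q. length xs = 4 \<Longrightarrow> (\<forall>i. odd i \<longrightarrow> q i = pe i) \<Longrightarrow>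
      sat r (list_env xs q) \<psi> = surj_graph (xs!0) (xs!1) (xs!2) (xs!3)"
    using definable_surj_graph unfolding definable_def by blast
  let ?e = "list_env [empty_set, empty_set, \<alpha>, E] pe"
  have "?e(0 := x, 2 := y) = list_env [x, y, \<alpha>, E] pe" for x y
    by (rule ext) (auto simp: list_env_def nth_Cons')
  then have sat: "sat r (?e(0 := x, 2 := y)) \<psi> = surj_graph x y \<alpha> E" for x y
    using \<psi>[of "[x, y, \<alpha>, E]" pe] by simp
  have "class_surj_onto r {z. in_C z} \<psi> ?e 0 2 \<alpha>"
    unfolding class_surj_onto_def sat
    using surj_graph_unique[OF \<alpha> E] surj_graph_into[OF \<alpha> E nonzero] surj_graph_onto[OF \<alpha> E]
    by blast
  then show ?thesis by (intro exI[of _ \<psi>] exI[of _ ?e] exI[of _ 0] exI[of _ 2]) simp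
qed

end

theorem proposition7p1:
  fixes r :: "'a \<Rightarrow> 'a \<Rightarrow> bool" and \<phi> :: form and e :: "nat \<Rightarrow> 'a" and n :: nat and \<alpha> :: 'a
  assumes "zf_model r"
    and "proper_class r (def_class r \<phi> e n)"
    and "zf_ordinal r \<alpha>"
    and "\<exists>y. r y \<alpha>"
  shows "\<exists>\<psi> e' i j. i \<noteq> j \<and> class_surj_onto r (def_class r \<phi> e n) \<psi> e' i j \<alpha>"
proof -
  define pe where "pe = (\<lambda>i. e ((i - 1) div 2))"
  have params: "(\<lambda>i. pe (Suc (2*i))) = e" by (auto simp: pe_def)
  interpret zf_proper_class r pe n \<phi>
  proof
    show "zf_model r" by (rule assms(1))
    show "proper_class r {z. sat r ((\<lambda>i. pe (Suc (2*i)))(n := z)) \<phi>}"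
      using assms(2) unfolding params def_class_def .
  qed
  have "{z. in_C z} = def_class r \<phi> e n" unfolding in_C_def params def_class_def ..
  then show ?thesis using class_surj_onto_ordinal[OF assms(3,4)] by simp
qed

end
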